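(* Assume the standing hypotheses (H). Let $A$ be a part of $G$ with $|A|=3$, let $\{u,v\}\subseteq A$ be a good pair for $A$, and let $x$ be the third vertex of $A$. Then \[\bigl|L(x)\cup (L(u)\cap L(v))\bigr|\ \ge\ k+\frac{k_3}{3}+k_4 .\]
   Context: A list assignment $L$ assigns to each vertex $v$ a set $L(v)$ of colors; an $L$-coloring is a proper coloring $f$ with $f(v)\in L(v)$ for all $v$; $\mathrm{ch}$ denotes choice number and $\chi$ chromatic number. A part of a complete multipartite graph is one of its maximal stable sets. Standing hypotheses (H): $k\ge1$ and $n\ge 2k+2$ are integers; $G$ is a complete $k$-partite graph (exactly $k$ nonempty parts) on $n$ vertices; $L$ is a list assignment for $G$ with $|L(v)|\ge\lceil (n+k-1)/3\rceil$ for every vertex $v$; $G$ has no $L$-coloring; $\left|\bigcup_{v\in V(G)}L(v)\right|\le n-1$; and every graph $H$ with fewer than $n$ vertices satisfies $\mathrm{ch}(H)\le\max\{\chi(H),\lceil(|V(H)|+\chi(H)-1)/3\rceil\}$. For $i\in\{1,2,3,4\}$, $k_i$ denotes the number of parts of $G$ of size $i$. For a part $A$ with $|A|\ge3$, a pair $\{u,v\}\subseteq A$ of distinct vertices is a good pair for $A$ if either $|A|=3$ and $|L(u)\cap L(v)|\ge\frac{k_1+k_4+1}{3}$, or $|A|=4$ and $|L(u)\cap L(v)|\ge|L(w)\cap L(z)|$ where $\{w,z\}=A\setminus\{u,v\}$. *)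

theory Defs
  imports Complex_Main
begin

definition simple_graph :: "'v set \<Rightarrow> ('v \<Rightarrow> 'v \<Rightarrow> bool) \<Rightarrow> bool" where
  "simple_graph V E \<longleftrightarrow> finite V \<and>
     (\<forall>u v. E u v \<longrightarrow> u \<in> V \<and> v \<in> V \<and> u \<noteq> v \<and> E v u)"

definition proper_coloring :: "'v set \<Rightarrow> ('v \<Rightarrow> 'v \<Rightarrow> bool) \<Rightarrow> ('v \<Rightarrow> 'c) \<Rightarrow> bool" where
  "proper_coloring V E f \<longleftrightarrow> (\<forall>u\<in>V. \<forall>v\<in>V. E u v \<longrightarrow> f u \<noteq> f v)"

definition L_coloring :: "'v set \<Rightarrow> ('v \<Rightarrow> 'v \<Rightarrow> bool) \<Rightarrow> ('v \<Rightarrow> 'c set) \<Rightarrow> ('v \<Rightarrow> 'c) \<Rightarrow> bool" where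
  "L_coloring V E L f \<longleftrightarrow> proper_coloring V E f \<and> (\<forall>v\<in>V. f v \<in> L v)"

definition colorable :: "'v set \<Rightarrow> ('v \<Rightarrow> 'v \<Rightarrow> bool) \<Rightarrow> nat \<Rightarrow> bool" where
  "colorable V E m \<longleftrightarrow> (\<exists>f :: 'v \<Rightarrow> nat. proper_coloring V E f \<and> f ` V \<subseteq> {..<m})"

definition chromatic_number :: "'v set \<Rightarrow> ('v \<Rightarrow> 'v \<Rightarrow> bool) \<Rightarrow> nat" where
  "chromatic_number V E = (LEAST m. colorable V E m)"

text \<open>m-choosable: every assignment of (finite) lists of size at least m admits an L-coloring.
  Colors are taken from nat, which is no loss of generality (lists are finite).\<close>
definition choosable :: "'v set \<Rightarrow> ('v \<Rightarrow> 'v \<Rightarrow> bool) \<Rightarrow> nat \<Rightarrow> bool" where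
  "choosable V E m \<longleftrightarrow> (\<forall>L :: 'v \<Rightarrow> nat set.
      (\<forall>v\<in>V. finite (L v) \<and> m \<le> card (L v)) \<longrightarrow> (\<exists>f. L_coloring V E L f))"

definition choice_number :: "'v set \<Rightarrow> ('v \<Rightarrow> 'v \<Rightarrow> bool) \<Rightarrow> nat" where
  "choice_number V E = (LEAST m. choosable V E m)"

definition complete_multipartite :: "'v set \<Rightarrow> ('v \<Rightarrow> 'v \<Rightarrow> bool) \<Rightarrow> 'v set set \<Rightarrow> bool" where
  "complete_multipartite V E P \<longleftrightarrow>
     finite V \<and> \<Union>P = V \<and> (\<forall>X\<in>P. X \<noteq> {}) \<and>
     (\<forall>X\<in>P. \<forall>Y\<in>P. X \<noteq> Y \<longrightarrow> X \<inter> Y = {}) \<and>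
     (\<forall>u v. E u v \<longleftrightarrow> u \<in> V \<and> v \<in> V \<and> (\<forall>X\<in>P. \<not> (u \<in> X \<and> v \<in> X)))"

definition num_parts :: "'v set set \<Rightarrow> nat \<Rightarrow> nat" where
  "num_parts P i = card {X\<in>P. card X = i}"

definition good_pair :: "'v set set \<Rightarrow> ('v \<Rightarrow> 'c set) \<Rightarrow> 'v set \<Rightarrow> 'v \<Rightarrow> 'v \<Rightarrow> bool" where
  "good_pair P L A u v \<longleftrightarrow> u \<in> A \<and> v \<in> A \<and> u \<noteq> v \<and>
     ((card A = 3 \<and> real (card (L u \<inter> L v)) \<ge> (real (num_parts P 1) + real (num_parts P 4) + 1) / 3)
      \<or> (card A = 4 \<and> (\<forall>w z. A - {u, v} = {w, z} \<longrightarrow> card (L u \<inter> L v) \<ge> card (L w \<inter> L z))))"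

end

theory Submission
  imports Defs
begin

text \<open>If the three lists of the part \<open>A\<close> shared a colour \<open>c\<close>, we could give \<open>c\<close> to all of \<open>A\<close> and
  delete it from every other list. What remains is a complete \<open>(k-1)\<close>-partite graph on fewer
  vertices, whose choice number is, by minimality, at most \<open>\<lceil>(n+k-1)/3\<rceil> - 1\<close>; so the
  shortened lists still admit a colouring, and \<open>G\<close> would be \<open>L\<close>-colourable. Hence \<open>L x\<close> is
  disjoint from \<open>L u \<inter> L v\<close>, and the bound follows by adding \<open>|L x| \<ge> (n+k-1)/3\<close>, the good-pair
  bound \<open>|L u \<inter> L v| \<ge> (k\<^sub>1+k\<^sub>4+1)/3\<close> and the part count \<open>n + k\<^sub>1 \<ge> 2k + k\<^sub>3 + 2k\<^sub>4\<close>.\<close>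

lemma ex_inj_on_representatives:
  assumes "finite W" "\<forall>w\<in>W. card W \<le> card (L w)"
  shows "\<exists>f. inj_on f W \<and> (\<forall>w\<in>W. f w \<in> L w)"
  using assms
proof (induction W arbitrary: L rule: finite_induct)
  case empty
  then show ?case by auto
next
  case (insert a W)
  then have "L a \<noteq> {}" by auto
  then obtain c where c: "c \<in> L a" by auto
  have "\<forall>w\<in>W. card W \<le> card (L w - {c})"
  proof
    fix w assume "w \<in> W"
    then have "Suc (card W) \<le> card (L w)" using insert by auto
    moreover have "card (L w) - card {c} \<le> card (L w - {c})"
      by (rule diff_card_le_card_Diff) simp
    ultimately show "card W \<le> card (L w - {c})" by simp
  qed
  then obtain f where f: "inj_on f W" "\<forall>w\<in>W. f w \<in> L w - {c}"
    using insert.IH[of "\<lambda>w. L w - {c}"] by auto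
  have "inj_on (f(a := c)) (insert a W)"
    using f insert.hyps(2) unfolding inj_on_def by (metis DiffE fun_upd_apply insert_iff)
  moreover have "\<forall>w\<in>insert a W. (f(a := c)) w \<in> L w"
    using f c insert.hyps(2) by auto
  ultimately show ?case by blast
qed

lemma choosable_card:
  assumes "finite W" "\<And>w. \<not> F w w"
  shows "choosable W F (card W)"
  unfolding choosable_def
proof (intro allI impI)
  fix L :: "'a \<Rightarrow> nat set"
  assume "\<forall>v\<in>W. finite (L v) \<and> card W \<le> card (L v)"
  then obtain f where "inj_on f W" "\<forall>w\<in>W. f w \<in> L w"
    using ex_inj_on_representatives[OF assms(1), of L] by auto
  then show "\<exists>f. L_coloring W F L f"
    unfolding L_coloring_def proper_coloring_def inj_on_def using assms(2) by metis
qed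

lemma choosable_choice_number:
  assumes "finite W" "\<And>w. \<not> F w w"
  shows "choosable W F (choice_number W F)"
  unfolding choice_number_def by (rule LeastI) (rule choosable_card[OF assms])

lemma chromatic_number_le: "colorable V E m \<Longrightarrow> chromatic_number V E \<le> m"
  unfolding chromatic_number_def by (rule Least_le)

lemma colorable_by_independent_sets:
  assumes "finite Q" "V \<subseteq> \<Union>Q" "\<forall>X\<in>Q. \<forall>a\<in>X. \<forall>b\<in>X. \<not> E a b"
  shows "colorable V E (card Q)"
proof -
  obtain q where q: "bij_betw q Q {0..<card Q}"
    using ex_bij_betw_finite_nat[OF assms(1)] by auto
  define part where "part v = (SOME X. X \<in> Q \<and> v \<in> X)" for v
  have part: "part v \<in> Q" "v \<in> part v" if "v \<in> V" for v
    unfolding part_def using someI_ex[of "\<lambda>X. X \<in> Q \<and> v \<in> X"] that assms(2) by blast+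
  have "proper_coloring V E (q \<circ> part)"
    unfolding proper_coloring_def
  proof (intro ballI impI notI)
    fix a b assume ab: "a \<in> V" "b \<in> V" "E a b" and "(q \<circ> part) a = (q \<circ> part) b"
    then have "part a = part b"
      using bij_betw_imp_inj_on[OF q] part by (simp add: inj_on_eq_iff)
    then show False
      using assms(3) part[OF ab(1)] part[OF ab(2)] ab(3) by metis
  qed
  moreover have "(q \<circ> part) ` V \<subseteq> {..<card Q}"
    using bij_betw_apply[OF q] part by auto
  ultimately show ?thesis unfolding colorable_def by blast
qed

lemma colorable_pullback:
  assumes "colorable V E m" "h ` W \<subseteq> V"
    and "\<And>i j. i \<in> W \<Longrightarrow> j \<in> W \<Longrightarrow> F i j \<Longrightarrow> E (h i) (h j)"
  shows "colorable W F m"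
proof -
  obtain g :: "_ \<Rightarrow> nat" where g: "proper_coloring V E g" "g ` V \<subseteq> {..<m}"
    using assms(1) unfolding colorable_def by blast
  have "proper_coloring W F (g \<circ> h)"
    using g(1) assms(2,3) unfolding proper_coloring_def by (simp add: image_subset_iff)
  moreover have "(g \<circ> h) ` W \<subseteq> {..<m}" using g(2) assms(2) by auto
  ultimately show ?thesis unfolding colorable_def by blast
qed

text \<open>Choosability only speaks about nat-indexed graphs with nat colours; a bijective
  copy carries it over to arbitrary vertices and colours.\<close>
lemma L_coloring_of_choosable_copy:
  fixes L :: "'v \<Rightarrow> 'c set" and F :: "nat \<Rightarrow> nat \<Rightarrow> bool"
  assumes h: "bij_betw h W V" and ch: "choosable W F m" and "finite V"
    and FE: "\<And>i j. i \<in> W \<Longrightarrow> j \<in> W \<Longrightarrow> E (h i) (h j) \<Longrightarrow> F i j"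
    and L: "\<forall>w\<in>V. finite (L w) \<and> m \<le> card (L w)"
  shows "\<exists>f. L_coloring V E L f"
proof -
  define C where "C = (\<Union>w\<in>V. L w)"
  have "finite C" unfolding C_def using \<open>finite V\<close> L by auto
  then obtain e :: "'c \<Rightarrow> nat" where e_inj: "inj_on e C"
    using ex_bij_betw_finite_nat bij_betw_imp_inj_on by blast
  have hW: "h i \<in> V" if "i \<in> W" for i using h that by (rule bij_betw_apply)
  define L' where "L' i = e ` L (h i)" for i
  have "\<forall>i\<in>W. finite (L' i) \<and> m \<le> card (L' i)"
  proof
    fix i assume "i \<in> W"
    moreover have "card (L' i) = card (L (h i))"
      unfolding L'_def using \<open>i \<in> W\<close> hW
      by (intro card_image inj_on_subset[OF e_inj]) (auto simp: C_def)
    ultimately show "finite (L' i) \<and> m \<le> card (L' i)" using L hW L'_def by auto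
  qed
  then obtain g where g: "L_coloring W F L' g" using ch unfolding choosable_def by blast
  define f where "f w = inv_into C e (g (inv_into W h w))" for w
  have f: "f w \<in> L w \<and> e (f w) = g (inv_into W h w)" if "w \<in> V" for w
  proof -
    have i: "inv_into W h w \<in> W" "h (inv_into W h w) = w"
      using h that by (auto intro: bij_betw_apply[OF bij_betw_inv_into] bij_betw_inv_into_right)
    then have "g (inv_into W h w) \<in> e ` L w" using g unfolding L_coloring_def L'_def by metis
    then obtain y where "y \<in> L w" "g (inv_into W h w) = e y" by auto
    moreover have "y \<in> C" using \<open>y \<in> L w\<close> that C_def by auto
    ultimately show ?thesis unfolding f_def using e_inj by (simp add: inv_into_f_f)
  qed
  have "proper_coloring V E f"
    unfolding proper_coloring_def
  proof (intro ballI impI)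
    fix w1 w2 assume w: "w1 \<in> V" "w2 \<in> V" "E w1 w2"
    have "inv_into W h w1 \<in> W" "inv_into W h w2 \<in> W"
      using h w by (auto intro: bij_betw_apply[OF bij_betw_inv_into])
    moreover have "E (h (inv_into W h w1)) (h (inv_into W h w2))"
      using h w by (simp add: bij_betw_inv_into_right)
    ultimately have "g (inv_into W h w1) \<noteq> g (inv_into W h w2)"
      using g FE unfolding L_coloring_def proper_coloring_def by blast
    then show "f w1 \<noteq> f w2" using f w by metis
  qed
  then show ?thesis using f unfolding L_coloring_def by blast
qed

lemma L_coloring_colour_part:
  assumes G: "complete_multipartite V E P" and A: "A \<in> P" and c: "\<forall>w\<in>A. c \<in> L w"
    and f: "L_coloring (V - A) E (\<lambda>w. L w - {c}) f"
  shows "L_coloring V E L (\<lambda>w. if w \<in> A then c else f w)"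
proof -
  have E_outside_A: "E a b \<Longrightarrow> a \<in> V \<and> b \<in> V \<and> \<not> (a \<in> A \<and> b \<in> A)" for a b
    using G A unfolding complete_multipartite_def by blast
  have f_col: "f w \<in> L w \<and> f w \<noteq> c" if "w \<in> V" "w \<notin> A" for w
    using f that unfolding L_coloring_def by blast
  have f_prop: "f a \<noteq> f b" if "a \<in> V - A" "b \<in> V - A" "E a b" for a b
    using f that unfolding L_coloring_def proper_coloring_def by blast
  show ?thesis
    unfolding L_coloring_def proper_coloring_def
  proof (intro conjI ballI impI)
    fix a b assume "a \<in> V" "b \<in> V" "E a b"
    then have "\<not> (a \<in> A \<and> b \<in> A)" using E_outside_A by blast
    then consider "a \<in> A" "b \<notin> A" | "a \<notin> A" "b \<in> A" | "a \<notin> A" "b \<notin> A" by blast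
    then show "(if a \<in> A then c else f a) \<noteq> (if b \<in> A then c else f b)"
    proof cases
      case 1
      then show ?thesis using f_col[of b] \<open>b \<in> V\<close> by auto
    next
      case 2
      then show ?thesis using f_col[of a] \<open>a \<in> V\<close> by auto
    next
      case 3
      then show ?thesis using f_prop[of a b] \<open>a \<in> V\<close> \<open>b \<in> V\<close> \<open>E a b\<close> by simp
    qed
  next
    fix w assume "w \<in> V"
    then show "(if w \<in> A then c else f w) \<in> L w" using c f_col[of w] by auto
  qed
qed

lemma max_ceiling_le_ceiling_minus_one:
  fixes c m n k :: nat
  assumes "c + 1 \<le> k" "m + 2 \<le> n" "2 * k \<le> n + 1"
  shows "max (real c) (of_int \<lceil>(real m + real c - 1) / 3\<rceil>)
           \<le> of_int \<lceil>(real n + real k - 1) / 3\<rceil> - 1"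
proof -
  define r where "r = \<lceil>(real n + real k - 1) / 3\<rceil>"
  have "\<lceil>(real m + real c - 1) / 3\<rceil> \<le> \<lceil>(real n + real k - 1) / 3 - 1\<rceil>"
    using assms(1,2) by (intro ceiling_mono) simp
  then have "\<lceil>(real m + real c - 1) / 3\<rceil> \<le> r - 1" by (simp add: r_def)
  moreover have "int c + 1 \<le> r"
    unfolding r_def using assms(1,3) by (simp add: le_ceiling_iff)
  ultimately show ?thesis unfolding r_def[symmetric] by (simp del: of_int_diff)
qed

lemma complete_multipartite_partition:
  assumes "complete_multipartite V E P"
  shows "finite P" "pairwise disjnt P" "\<And>X. X \<in> P \<Longrightarrow> finite X \<and> X \<noteq> {}" "\<Union>P = V"
proof -
  have "finite (\<Union>P)" "\<Union>P = V" using assms unfolding complete_multipartite_def by auto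
  then show "finite P" "\<Union>P = V" using finite_UnionD by auto
  show "X \<in> P \<Longrightarrow> finite X \<and> X \<noteq> {}" for X
    using assms \<open>finite (\<Union>P)\<close> unfolding complete_multipartite_def by (auto intro: finite_subset)
  show "pairwise disjnt P"
    using assms unfolding complete_multipartite_def pairwise_def disjnt_def by blast
qed

lemma num_parts_eq_sum: "finite P \<Longrightarrow> num_parts P i = (\<Sum>X\<in>P. of_bool (card X = i))"
  by (simp add: num_parts_def Int_def)

lemma partition_num_parts_le:
  assumes "finite P" "pairwise disjnt P" "\<And>X. X \<in> P \<Longrightarrow> finite X \<and> X \<noteq> {}"
  shows "2 * card P + num_parts P 3 + 2 * num_parts P 4 \<le> card (\<Union>P) + num_parts P 1"
proof -
  have "(\<Sum>X\<in>P. 2 + of_bool (card X = 3) + 2 * of_bool (card X = 4))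
      \<le> (\<Sum>X\<in>P. card X + of_bool (card X = (1::nat)))"
  proof (rule sum_mono)
    fix X assume "X \<in> P"
    then have "card X \<noteq> 0" using assms(3) by auto
    then show "2 + of_bool (card X = 3) + 2 * of_bool (card X = 4) \<le> card X + of_bool (card X = 1)"
      by auto
  qed
  moreover have "(\<Sum>X\<in>P. 2 + of_bool (card X = 3) + 2 * of_bool (card X = 4))
      = 2 * card P + num_parts P 3 + 2 * num_parts P 4"
    by (simp only: sum.distrib sum_distrib_left[symmetric] num_parts_eq_sum[OF assms(1)] sum_constant)
      simp
  moreover have "(\<Sum>X\<in>P. card X + of_bool (card X = (1::nat))) = card (\<Union>P) + num_parts P 1"
    using assms by (simp only: sum.distrib num_parts_eq_sum[OF assms(1)] card_Union_disjoint)
  ultimately show ?thesis by simp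
qed

lemma no_common_colour_on_part:
  fixes V :: "'v set" and L :: "'v \<Rightarrow> 'c set"
  assumes G: "complete_multipartite V E P" and kparts: "card P = k" and nV: "card V = n"
    and nk: "2 * k \<le> n + 1"
    and Lfin: "\<forall>w\<in>V. finite (L w)"
    and Lsize: "\<forall>w\<in>V. real (card (L w)) \<ge> of_int \<lceil>(real n + real k - 1) / 3\<rceil>"
    and noLcol: "\<not> (\<exists>f. L_coloring V E L f)"
    and minimal: "\<forall>(W :: nat set) F. simple_graph W F \<and> card W < n \<longrightarrow>
        real (choice_number W F) \<le> max (real (chromatic_number W F))
           (of_int \<lceil>(real (card W) + real (chromatic_number W F) - 1) / 3\<rceil>)"
    and A: "A \<in> P" and A2: "2 \<le> card A"
  shows "(\<Inter>w\<in>A. L w) = {}"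
proof (rule ccontr)
  assume "(\<Inter>w\<in>A. L w) \<noteq> {}"
  then obtain c where c: "\<forall>w\<in>A. c \<in> L w" by blast
  note P = complete_multipartite_partition[OF G]
  have E_iff: "E a b \<longleftrightarrow> a \<in> V \<and> b \<in> V \<and> (\<forall>X\<in>P. \<not> (a \<in> X \<and> b \<in> X))" for a b
    using G unfolding complete_multipartite_def by blast
  have "finite V" "A \<subseteq> V" using G A unfolding complete_multipartite_def by auto
  define m where "m = card (V - A)"
  have m: "m + 2 \<le> n"
    using A2 \<open>finite V\<close> \<open>A \<subseteq> V\<close> nV card_mono[of V A]
    by (simp add: m_def card_Diff_subset finite_subset)
  obtain h where h: "bij_betw h {0..<m} (V - A)"
    using ex_bij_betw_nat_finite[of "V - A"] \<open>finite V\<close> m_def by auto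
  define F where "F i j \<longleftrightarrow> i \<in> {0..<m} \<and> j \<in> {0..<m} \<and> E (h i) (h j)" for i j
  have Eirr: "\<not> E a a" for a
    using E_iff P(4) by blast
  moreover have "E a b \<Longrightarrow> E b a" for a b
    using E_iff by blast
  ultimately have "simple_graph {0..<m} F"
    unfolding simple_graph_def F_def by auto
  have "colorable (V - A) E (card (P - {A}))"
    using E_iff P(1,4) by (intro colorable_by_independent_sets) auto
  then have "colorable {0..<m} F (card (P - {A}))"
    by (rule colorable_pullback) (use h in \<open>auto simp: F_def bij_betw_def\<close>)
  then have chi: "chromatic_number {0..<m} F + 1 \<le> k"
    using chromatic_number_le card.remove[OF P(1) A] kparts by fastforce
  have "real (choice_number {0..<m} F)
      \<le> max (real (chromatic_number {0..<m} F))
           (of_int \<lceil>(real m + real (chromatic_number {0..<m} F) - 1) / 3\<rceil>)"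
    using minimal[rule_format, of "{0..<m}" F] \<open>simple_graph {0..<m} F\<close> m by simp
  also have "\<dots> \<le> of_int \<lceil>(real n + real k - 1) / 3\<rceil> - 1"
    by (rule max_ceiling_le_ceiling_minus_one[OF chi m nk])
  finally have choice:
    "real (choice_number {0..<m} F) \<le> of_int \<lceil>(real n + real k - 1) / 3\<rceil> - 1" .
  have "\<forall>w\<in>V - A. finite (L w - {c}) \<and> choice_number {0..<m} F \<le> card (L w - {c})"
  proof
    fix w assume "w \<in> V - A"
    then have "finite (L w)" "real (card (L w)) \<ge> of_int \<lceil>(real n + real k - 1) / 3\<rceil>"
      using Lfin Lsize by auto
    moreover have "card (L w) \<le> card (L w - {c}) + 1"
      by (auto simp: card_Diff_singleton_if)
    ultimately show "finite (L w - {c}) \<and> choice_number {0..<m} F \<le> card (L w - {c})"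
      using choice by simp
  qed
  moreover have "choosable {0..<m} F (choice_number {0..<m} F)"
    using Eirr by (intro choosable_choice_number) (simp_all add: F_def)
  moreover have "F i j" if "i \<in> {0..<m}" "j \<in> {0..<m}" "E (h i) (h j)" for i j
    using that by (simp add: F_def)
  ultimately obtain f where "L_coloring (V - A) E (\<lambda>w. L w - {c}) f"
    using L_coloring_of_choosable_copy[OF h] \<open>finite V\<close> by (metis finite_Diff)
  then have "L_coloring V E L (\<lambda>w. if w \<in> A then c else f w)"
    by (rule L_coloring_colour_part[OF G A c])
  with noLcol show False by blast
qed

theorem lemma23:
  fixes V :: "'v set" and E :: "'v \<Rightarrow> 'v \<Rightarrow> bool" and P :: "'v set set"
    and L :: "'v \<Rightarrow> 'c set" and k n :: nat and A :: "'v set" and u v x :: 'v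
  assumes k1: "k \<ge> 1"
    and nk: "n \<ge> 2 * k + 2"
    and G: "complete_multipartite V E P"
    and kparts: "card P = k"
    and nV: "card V = n"
    and Lfin: "\<forall>w\<in>V. finite (L w)"
    and Lsize: "\<forall>w\<in>V. real (card (L w)) \<ge> of_int \<lceil>(real n + real k - 1) / 3\<rceil>"
    and noLcol: "\<not> (\<exists>f. L_coloring V E L f)"
    and union: "card (\<Union>w\<in>V. L w) \<le> n - 1"
    and minimal: "\<forall>(W :: nat set) F. simple_graph W F \<and> card W < n \<longrightarrow>
        real (choice_number W F) \<le> max (real (chromatic_number W F))
           (of_int \<lceil>(real (card W) + real (chromatic_number W F) - 1) / 3\<rceil>)"
    and A: "A \<in> P" and A3: "card A = 3"
    and gp: "good_pair P L A u v"
    and x: "x \<in> A" "x \<noteq> u" "x \<noteq> v"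
  shows "real (card (L x \<union> (L u \<inter> L v))) \<ge>
           real k + real (num_parts P 3) / 3 + real (num_parts P 4)"
proof -
  note P = complete_multipartite_partition[OF G]
  have "u \<in> A" "v \<in> A" "u \<noteq> v" and uv: "real (card (L u \<inter> L v)) \<ge>
      (real (num_parts P 1) + real (num_parts P 4) + 1) / 3"
    using gp A3 unfolding good_pair_def by auto
  then have "A = {u, v, x}"
    using x A3 P(3)[OF A] by (intro card_subset_eq[symmetric]) auto
  moreover have "(\<Inter>w\<in>A. L w) = {}"
    using no_common_colour_on_part[OF G kparts nV _ Lfin Lsize noLcol minimal A] nk A3 by simp
  ultimately have "L x \<inter> (L u \<inter> L v) = {}" by auto
  moreover have "x \<in> V" "u \<in> V" using x \<open>u \<in> A\<close> A P(4) by auto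
  ultimately have "real (card (L x \<union> (L u \<inter> L v)))
      = real (card (L x)) + real (card (L u \<inter> L v))"
    using Lfin by (simp add: card_Un_disjoint)
  moreover have "real (card (L x)) \<ge> (real n + real k - 1) / 3"
    using bspec[OF Lsize \<open>x \<in> V\<close>] le_of_int_ceiling[of "(real n + real k - 1) / 3"] by linarith
  moreover have "2 * real k + real (num_parts P 3) + 2 * real (num_parts P 4)
      \<le> real n + real (num_parts P 1)"
    using of_nat_mono[OF partition_num_parts_le[OF P(1-3)]] P(4) nV kparts by simp
  ultimately show ?thesis using uv by (simp add: field_simps)
qed

end
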